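(* Let $G=(V,E)$ be a finite graph with adjacency matrix $A$, and let $I,J\subset V$ be disjoint sets of cardinality $b$. Assume that there exists at least one path matching from $I$ to $J$ and that all minimal path matchings from $I$ to $J$ have the same matching map. Let $|V|-\ell$ be the length of a minimal path matching. If $m_1,\dots,m_r$ are the multiplicities of the distinct eigenvalues $\lambda_1,\dots,\lambda_r$ of $A$, then $$\sum_{i=1}^r(m_i-b)_+\le\ell.$$ Consequently, for any $1\le k\le r$, $m_1+\dots+m_k\le kb+\ell$.
   Context: For disjoint $I=\{i_1,\dots,i_b\}$, $J=\{j_1,\dots,j_b\}\subset V$, a path matching from $I$ to $J$ is a collection $\Pi=\{\pi_1,\dots,\pi_b\}$ of pairwise vertex-disjoint self-avoiding paths $\pi_s=(u_{s,1},\dots,u_{s,p_s})$ in $G$ such that, for some permutation $\sigma$ of $\{1,\dots,b\}$, $u_{s,1}=i_s$ and $u_{s,p_s}=j_{\sigma(s)}$ for all $s$; $\sigma$ is its matching map. Its length is $|\Pi|=\sum_s p_s$ (the total number of vertices on the paths). A minimal path matching is one of minimal length. $x_+=\max(x,0)$. *)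

theory Defs
  imports "Jordan_Normal_Form.Char_Poly"
begin

text \<open>A finite simple graph on vertex set V = {0..<n}: an edge relation E that is
  symmetric and irreflexive on V (edges outside V are ignored).\<close>

definition simple_graph :: "nat \<Rightarrow> (nat \<Rightarrow> nat \<Rightarrow> bool) \<Rightarrow> bool" where
  "simple_graph n E \<longleftrightarrow> (\<forall>u<n. \<forall>v<n. E u v \<longleftrightarrow> E v u) \<and> (\<forall>v<n. \<not> E v v)"

definition adjacency_matrix :: "nat \<Rightarrow> (nat \<Rightarrow> nat \<Rightarrow> bool) \<Rightarrow> real mat" where
  "adjacency_matrix n E = mat n n (\<lambda>(i, j). if E i j then 1 else 0)"

definition sa_path :: "nat \<Rightarrow> (nat \<Rightarrow> nat \<Rightarrow> bool) \<Rightarrow> nat list \<Rightarrow> bool" where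
  "sa_path n E p \<longleftrightarrow> p \<noteq> [] \<and> distinct p \<and> set p \<subseteq> {0..<n}
     \<and> (\<forall>k. Suc k < length p \<longrightarrow> E (p ! k) (p ! Suc k))"

definition path_matching ::
  "nat \<Rightarrow> (nat \<Rightarrow> nat \<Rightarrow> bool) \<Rightarrow> nat set \<Rightarrow> nat set \<Rightarrow> (nat \<Rightarrow> nat list) \<Rightarrow> bool" where
  "path_matching n E I J P \<longleftrightarrow>
     (\<forall>i\<in>I. sa_path n E (P i) \<and> hd (P i) = i)
     \<and> (\<forall>i\<in>I. \<forall>i'\<in>I. i \<noteq> i' \<longrightarrow> set (P i) \<inter> set (P i') = {})
     \<and> bij_betw (\<lambda>i. last (P i)) I J"

definition matching_map :: "(nat \<Rightarrow> nat list) \<Rightarrow> nat \<Rightarrow> nat" where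
  "matching_map P i = last (P i)"

definition pm_length :: "nat set \<Rightarrow> (nat \<Rightarrow> nat list) \<Rightarrow> nat" where
  "pm_length I P = (\<Sum>i\<in>I. length (P i))"

definition min_path_matching ::
  "nat \<Rightarrow> (nat \<Rightarrow> nat \<Rightarrow> bool) \<Rightarrow> nat set \<Rightarrow> nat set \<Rightarrow> (nat \<Rightarrow> nat list) \<Rightarrow> bool" where
  "min_path_matching n E I J P \<longleftrightarrow> path_matching n E I J P
     \<and> (\<forall>Q. path_matching n E I J Q \<longrightarrow> pm_length I P \<le> pm_length I Q)"

definition eig_mult :: "real mat \<Rightarrow> real \<Rightarrow> nat" where
  "eig_mult A x = order x (char_poly A)"

end

theory Submission
  imports Defs "Jordan_Normal_Form.Schur_Decomposition" "HOL-Combinatorics.Cycles"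
begin

text \<open>Let \<open>\<beta>\<close> be the inverse of the common matching map of the minimal path matchings and
  let \<open>N(x)\<close> be \<open>x I - A\<close> with every row \<open>j \<in> J\<close> replaced by the unit row at \<open>\<beta> j\<close>.
  A permutation contributes to \<open>det N\<close> only if it follows \<open>\<beta>\<close> on \<open>J\<close> and moves every
  other vertex it does not fix to a neighbour. The orbits of \<open>I\<close> under such a permutation form
  a path matching through moved vertices, so it fixes at most \<open>\<ell>\<close> vertices and
  \<open>deg (det N) \<le> \<ell>\<close>. A permutation fixing exactly \<open>\<ell>\<close> vertices closes a minimal
  path matching into cycles via \<open>\<beta>\<close>, because all minimal path matchings have the same
  matching map; each such permutation contributes \<open>+1\<close> to the coefficient of \<open>x ^ \<ell>\<close>,
  and closing a given minimal path matching shows there is one, so \<open>det N \<noteq> 0\<close>.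
  As \<open>A\<close> is symmetric, an eigenvalue \<open>\<lambda>\<close> of multiplicity \<open>m\<close> has \<open>m\<close> independent
  eigenvectors, and multiplying \<open>N\<close> by them shows \<open>(x - \<lambda>) ^ (m - b) dvd det N\<close>.
  Summing the orders of these roots gives \<open>\<Sum> (m\<^sub>i - b)\<^sub>+ \<le> deg (det N) \<le> \<ell>\<close>.\<close>

subsection \<open>Eigenvectors of real symmetric matrices\<close>

lemma orthogonal_mat_with_first_col:
  fixes v :: "real vec"
  assumes v: "v \<in> carrier_vec n" and v0: "v \<noteq> 0\<^sub>v n"
  shows "\<exists>W \<in> carrier_mat n n. transpose_mat W * W = 1\<^sub>m n \<and> (\<exists>c. col W 0 = c \<cdot>\<^sub>v v)"
proof -
  interpret cof_vec_space n "TYPE(real)" .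
  define bs where "bs = basis_completion v"
  from basis_completion[OF v v0, folded bs_def]
  have dist: "distinct bs" and indep: "\<not> lin_dep (set bs)" and bs: "set bs \<subseteq> carrier_vec n"
    and hd_bs: "hd bs = v" and len_bs: "length bs = n" by auto
  have n: "n \<noteq> 0"
    using v v0 by (metis carrier_vecD eq_vecI index_zero_vec(2) less_nat_zero_code)
  from hd_bs len_bs n obtain vs where bs_v: "bs = v # vs" by (cases bs) auto
  define ws where "ws = gram_schmidt n bs"
  from gram_schmidt_result[OF bs dist indep ws_def]
  have ws: "set ws \<subseteq> carrier_vec n" "corthogonal ws" "length ws = n" by (auto simp: len_bs)
  have ws0: "ws ! 0 = v"
    using gram_schmidt_hd[OF v] ws(3) n unfolding ws_def bs_v by (metis hd_conv_nth list.size(3))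
  define s where "s = (\<lambda>w::real vec. 1 / sqrt (w \<bullet> w))"
  define W where "W = mat_of_cols n (map (\<lambda>w. s w \<cdot>\<^sub>v w) ws)"
  have wsi: "i < n \<Longrightarrow> ws ! i \<in> carrier_vec n" for i using ws by auto
  have W: "W \<in> carrier_mat n n" unfolding W_def using ws(3) by (simp add: mat_of_cols_def)
  have colW: "i < n \<Longrightarrow> col W i = s (ws ! i) \<cdot>\<^sub>v ws ! i" for i
    unfolding W_def using ws wsi by (subst col_mat_of_cols) auto
  have orth: "i < n \<Longrightarrow> j < n \<Longrightarrow> ws ! i \<bullet> ws ! j = 0 \<longleftrightarrow> i \<noteq> j" for i j
    using corthogonalD[OF ws(2), of i j] ws(3) by simp
  have pos: "i < n \<Longrightarrow> ws ! i \<bullet> ws ! i > 0" for i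
    using conjugate_square_ge_0_vec[of "ws ! i"] orth[of i i]
    by (simp add: order_le_neq_trans)
  have "transpose_mat W * W = 1\<^sub>m n"
  proof (rule eq_matI)
    fix i j assume "i < dim_row (1\<^sub>m n)" "j < dim_col (1\<^sub>m n)"
    hence i: "i < n" and j: "j < n" by auto
    have "(transpose_mat W * W) $$ (i, j) = s (ws ! i) * s (ws ! j) * (ws ! i \<bullet> ws ! j)"
      using i j W wsi[OF i] wsi[OF j] by (simp add: colW)
    also have "\<dots> = 1\<^sub>m n $$ (i, j)"
      using orth[OF i j] pos[OF i] i j by (cases "i = j") (auto simp: s_def field_simps)
    finally show "(transpose_mat W * W) $$ (i, j) = 1\<^sub>m n $$ (i, j)" .
  qed (use W in auto)
  moreover have "col W 0 = s v \<cdot>\<^sub>v v" using colW[of 0] ws0 n by simp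
  ultimately show ?thesis using W by blast
qed

lemma symmetric_mat_first_col_block:
  fixes A :: "'a::zero mat"
  assumes A: "A \<in> carrier_mat (Suc m) (Suc m)" and sym: "transpose_mat A = A"
    and col0: "\<And>i. i < Suc m \<Longrightarrow> A $$ (i, 0) = (if i = 0 then la else 0)"
  defines "A3 \<equiv> mat m m (\<lambda>(i, j). A $$ (Suc i, Suc j))"
  shows "A = four_block_mat (mat 1 1 (\<lambda>_. la)) (0\<^sub>m 1 m) (0\<^sub>m m 1) A3"
    and "transpose_mat A3 = A3"
proof -
  have entry_sym: "A $$ (j, i) = A $$ (i, j)" if "i < Suc m" "j < Suc m" for i j
    using sym[THEN arg_cong[of _ _ "\<lambda>M. M $$ (i, j)"]] A that by simp
  show "A = four_block_mat (mat 1 1 (\<lambda>_. la)) (0\<^sub>m 1 m) (0\<^sub>m m 1) A3"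
  proof (rule eq_matI)
    fix i j assume "i < dim_row (four_block_mat (mat 1 1 (\<lambda>_. la)) (0\<^sub>m 1 m) (0\<^sub>m m 1) A3)"
      "j < dim_col (four_block_mat (mat 1 1 (\<lambda>_. la)) (0\<^sub>m 1 m) (0\<^sub>m m 1) A3)"
    hence i: "i < Suc m" and j: "j < Suc m" by (auto simp: A3_def)
    show "A $$ (i, j) = four_block_mat (mat 1 1 (\<lambda>_. la)) (0\<^sub>m 1 m) (0\<^sub>m m 1) A3 $$ (i, j)"
    proof (cases "i = 0 \<or> j = 0")
      case True
      then show ?thesis using i j col0 col0[of j] entry_sym[of 0 j] by (auto simp: A3_def)
    next
      case False
      then obtain i' j' where "i = Suc i'" "j = Suc j'" by (metis not0_implies_Suc)
      then show ?thesis using i j by (auto simp: A3_def)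
    qed
  qed (use A in \<open>auto simp: A3_def\<close>)
  show "transpose_mat A3 = A3"
    by (rule eq_matI) (auto simp: A3_def entry_sym)
qed

lemma char_poly_orthogonal_conj:
  assumes A: "A \<in> carrier_mat n n" and W: "W \<in> carrier_mat n n"
    and WW: "transpose_mat W * W = 1\<^sub>m n" and WW': "W * transpose_mat W = 1\<^sub>m n"
  shows "char_poly (transpose_mat W * A * W) = char_poly A"
proof -
  have WT: "transpose_mat W \<in> carrier_mat n n" using W by auto
  have "W * (transpose_mat W * A * W) * transpose_mat W
      = (W * transpose_mat W) * A * (W * transpose_mat W)"
    using A W WT by (simp add: assoc_mult_mat[of _ n n _ n _ n])
  hence "similar_mat_wit A (transpose_mat W * A * W) W (transpose_mat W)"
    unfolding similar_mat_wit_def Let_def using A W WT WW WW' by simp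
  hence "similar_mat A (transpose_mat W * A * W)" unfolding similar_mat_def by blast
  thus ?thesis by (simp add: char_poly_similar)
qed

lemma symmetric_mat_deflation:
  fixes A :: "real mat"
  assumes A: "A \<in> carrier_mat (Suc m) (Suc m)" and sym: "transpose_mat A = A"
    and ev: "eigenvector A v la"
  obtains W A3 where "W \<in> carrier_mat (Suc m) (Suc m)"
    "transpose_mat W * W = 1\<^sub>m (Suc m)" "W * transpose_mat W = 1\<^sub>m (Suc m)"
    "A3 \<in> carrier_mat m m" "transpose_mat A3 = A3"
    "transpose_mat W * A * W = four_block_mat (mat 1 1 (\<lambda>_. la)) (0\<^sub>m 1 m) (0\<^sub>m m 1) A3"
proof -
  let ?n = "Suc m"
  from ev A have v: "v \<in> carrier_vec ?n" and v0: "v \<noteq> 0\<^sub>v ?n" and Av: "A *\<^sub>v v = la \<cdot>\<^sub>v v"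
    unfolding eigenvector_def by auto
  from orthogonal_mat_with_first_col[OF v v0] obtain W c where W: "W \<in> carrier_mat ?n ?n"
    and WW: "transpose_mat W * W = 1\<^sub>m ?n" and cW: "col W 0 = c \<cdot>\<^sub>v v" by auto
  have WT: "transpose_mat W \<in> carrier_mat ?n ?n" using W by auto
  have WW': "W * transpose_mat W = 1\<^sub>m ?n" using mat_mult_left_right_inverse[OF WT W WW] .
  define A' where "A' = transpose_mat W * A * W"
  have A': "A' \<in> carrier_mat ?n ?n" unfolding A'_def using W A by auto
  have sym': "transpose_mat A' = A'"
    unfolding A'_def using W A WT
    by (simp add: transpose_mult[of _ ?n ?n _ ?n] sym assoc_mult_mat[of _ ?n ?n _ ?n _ ?n])
  have AW0: "A *\<^sub>v col W 0 = la \<cdot>\<^sub>v col W 0" unfolding cW using A v Av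
    by (simp add: mult_mat_vec smult_smult_assoc mult.commute)
  have "A' $$ (i, 0) = (if i = 0 then la else 0)" if i: "i < ?n" for i
  proof -
    have "A' $$ (i, 0) = col W i \<bullet> col (A * W) 0"
      unfolding A'_def using i W A by (simp add: assoc_mult_mat[of _ ?n ?n _ ?n _ ?n])
    also have "col (A * W) 0 = A *\<^sub>v col W 0" using A W by (intro col_mult2) auto
    also have "col W i \<bullet> \<dots> = la * (transpose_mat W * W) $$ (i, 0)" unfolding AW0
      using W i by simp
    finally show ?thesis unfolding WW using i by simp
  qed
  from symmetric_mat_first_col_block[OF A' sym' this]
  show thesis unfolding A'_def by (intro that[OF W WW WW']) auto
qed

lemma char_poly_mat_1x1: "char_poly (mat 1 1 (\<lambda>_. e)) = [:- e, 1:]"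
  by (simp add: char_poly_defs det_def sign_def)

lemma four_block_eigenvector_cols:
  fixes A3 :: "'a::comm_ring_1 mat"
  assumes A3: "A3 \<in> carrier_mat m m" and P3: "P3 \<in> carrier_mat m m"
    and eigen: "\<forall>c<k. A3 *\<^sub>v col P3 c = la \<cdot>\<^sub>v col P3 c" and c: "c < Suc k" "c < Suc m"
  defines "B \<equiv> four_block_mat (1\<^sub>m 1) (0\<^sub>m 1 m) (0\<^sub>m m 1) P3"
  shows "col (four_block_mat (mat 1 1 (\<lambda>_. la)) (0\<^sub>m 1 m) (0\<^sub>m m 1) A3 * B) c = la \<cdot>\<^sub>v col B c"
proof (rule eq_vecI)
  have prod: "four_block_mat (mat 1 1 (\<lambda>_. la)) (0\<^sub>m 1 m) (0\<^sub>m m 1) A3 * B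
      = four_block_mat (mat 1 1 (\<lambda>_. la)) (0\<^sub>m 1 m) (0\<^sub>m m 1) (A3 * P3)"
    unfolding B_def using A3 P3 by (subst mult_four_block_mat) auto
  fix i assume "i < dim_vec (la \<cdot>\<^sub>v col B c)"
  hence i: "i < Suc m" using P3 by (simp add: B_def)
  show "col (four_block_mat (mat 1 1 (\<lambda>_. la)) (0\<^sub>m 1 m) (0\<^sub>m m 1) A3 * B) c $ i
      = (la \<cdot>\<^sub>v col B c) $ i"
  proof (cases "i = 0 \<or> c = 0")
    case True
    then show ?thesis unfolding prod using i c A3 P3 by (auto simp: B_def)
  next
    case False
    then obtain i' c' where ic: "i = Suc i'" "c = Suc c'" by (metis not0_implies_Suc)
    have "(A3 * P3) $$ (i', c') = (A3 *\<^sub>v col P3 c') $ i'" using ic i c A3 P3 by simp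
    also have "\<dots> = la * P3 $$ (i', c')" using eigen ic c i P3 by simp
    finally show ?thesis unfolding prod using ic i c A3 P3 by (auto simp: B_def)
  qed
qed (use A3 P3 in \<open>auto simp: B_def\<close>)

lemma eigenvector_cols_lift:
  fixes A :: "'a::field mat"
  assumes A: "A \<in> carrier_mat (Suc m) (Suc m)" and W: "W \<in> carrier_mat (Suc m) (Suc m)"
    and A3: "A3 \<in> carrier_mat m m" and P3: "P3 \<in> carrier_mat m m" and k: "k \<le> m"
    and AW: "A * W = W * four_block_mat (mat 1 1 (\<lambda>_. la)) (0\<^sub>m 1 m) (0\<^sub>m m 1) A3"
    and eigen: "\<forall>c<k. A3 *\<^sub>v col P3 c = la \<cdot>\<^sub>v col P3 c"
  defines "B \<equiv> four_block_mat (1\<^sub>m 1) (0\<^sub>m 1 m) (0\<^sub>m m 1) P3"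
  shows "\<forall>c<Suc k. A *\<^sub>v col (W * B) c = la \<cdot>\<^sub>v col (W * B) c"
proof (intro allI impI)
  fix c assume c: "c < Suc k"
  let ?n = "Suc m"
  define A' where "A' = four_block_mat (mat 1 1 (\<lambda>_. la)) (0\<^sub>m 1 m) (0\<^sub>m m 1) A3"
  have cn: "c < ?n" using c k by simp
  have A': "A' \<in> carrier_mat ?n ?n" and B: "B \<in> carrier_mat ?n ?n"
    unfolding A'_def B_def using A3 P3 by auto
  have "A *\<^sub>v col (W * B) c = col (A * (W * B)) c"
    by (rule col_mult2[OF A mult_carrier_mat[OF W B] cn, symmetric])
  also have "A * (W * B) = (A * W) * B" by (rule assoc_mult_mat[OF A W B, symmetric])
  also have "\<dots> = W * (A' * B)" unfolding AW A'_def[symmetric] by (rule assoc_mult_mat[OF W A' B])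
  also have "col \<dots> c = W *\<^sub>v col (A' * B) c" by (rule col_mult2[OF W mult_carrier_mat[OF A' B] cn])
  also have "\<dots> = la \<cdot>\<^sub>v (W *\<^sub>v col B c)"
    unfolding A'_def B_def four_block_eigenvector_cols[OF A3 P3 eigen c cn]
    using W B cn by (simp add: mult_mat_vec B_def)
  also have "\<dots> = la \<cdot>\<^sub>v col (W * B) c" by (simp only: col_mult2[OF W B cn])
  finally show "A *\<^sub>v col (W * B) c = la \<cdot>\<^sub>v col (W * B) c" .
qed

lemma det_nonzero_if_orthogonal:
  fixes W :: "'a::idom mat"
  assumes W: "W \<in> carrier_mat n n" and WW: "transpose_mat W * W = 1\<^sub>m n"
  shows "det W \<noteq> 0"
  using arg_cong[OF WW, of det] det_mult[OF transpose_carrier_mat[THEN iffD2, OF W] W]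
    det_transpose[OF W]
  by auto

lemma symmetric_mat_eigenvector_cols:
  fixes A :: "real mat"
  assumes "A \<in> carrier_mat n n" "transpose_mat A = A" "k \<le> Polynomial.order la (char_poly A)"
  shows "\<exists>P \<in> carrier_mat n n. det P \<noteq> 0 \<and> (\<forall>c<k. A *\<^sub>v col P c = la \<cdot>\<^sub>v col P c)"
  using assms
proof (induct k arbitrary: n A)
  case 0
  show ?case by (rule bexI[of _ "1\<^sub>m n"]) auto
next
  case (Suc k n A)
  note A = Suc(2) and sym = Suc(3) and ord = Suc(4)
  have cp0: "char_poly A \<noteq> 0" using degree_monic_char_poly[OF A] by auto
  have "poly (char_poly A) la = 0" using ord cp0 order_root[of "char_poly A" la] by simp
  hence ev: "eigenvalue A la" using eigenvalue_root_char_poly[OF A] by simp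
  obtain m where nm: "n = Suc m" using eigenvalue_imp_nonzero_dim[OF A ev] not0_implies_Suc by blast
  have A_Suc: "A \<in> carrier_mat (Suc m) (Suc m)" using A nm by simp
  obtain W A3 where W: "W \<in> carrier_mat n n"
    and WW: "transpose_mat W * W = 1\<^sub>m n" and WW': "W * transpose_mat W = 1\<^sub>m n"
    and A3: "A3 \<in> carrier_mat m m" and sym3: "transpose_mat A3 = A3"
    and blk: "transpose_mat W * A * W = four_block_mat (mat 1 1 (\<lambda>_. la)) (0\<^sub>m 1 m) (0\<^sub>m m 1) A3"
    using symmetric_mat_deflation[OF A_Suc sym find_eigenvector[OF A ev]] unfolding nm[symmetric]
    by blast
  have "char_poly A = [:-la, 1:] * char_poly A3"
    using char_poly_orthogonal_conj[OF A W WW WW'] char_poly_four_block_zeros_col[OF _ _ A3]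
    unfolding blk by (simp only: char_poly_mat_1x1 mat_carrier zero_carrier_mat)
  hence ord3: "Polynomial.order la (char_poly A) = Suc (Polynomial.order la (char_poly A3))"
    using cp0 by (metis order_mult order_power_n_n power_one_right plus_1_eq_Suc)
  with ord Suc(1)[OF A3 sym3] obtain P3 where P3: "P3 \<in> carrier_mat m m"
    and dP3: "det P3 \<noteq> 0" and eP3: "\<forall>c<k. A3 *\<^sub>v col P3 c = la \<cdot>\<^sub>v col P3 c" by auto
  define B where "B = four_block_mat (1\<^sub>m 1) (0\<^sub>m 1 m) (0\<^sub>m m 1) P3"
  have B: "B \<in> carrier_mat n n" unfolding B_def using P3 nm by auto
  have "det B = det P3" unfolding B_def
    by (subst det_four_block_mat_lower_left_zero_col) (use P3 in auto)
  moreover have "det W \<noteq> 0" by (rule det_nonzero_if_orthogonal[OF W WW])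
  ultimately have det_WB: "det (W * B) \<noteq> 0" using det_mult[OF W B] dP3 by simp
  have k: "k \<le> m"
    using ord ord3 order_degree[OF cp0, of la] degree_monic_char_poly[OF A] nm by simp
  have "W * (transpose_mat W * A * W) = (W * transpose_mat W) * (A * W)"
    using A W by (simp add: assoc_mult_mat[of _ n n _ n _ n])
  hence "A * W = W * four_block_mat (mat 1 1 (\<lambda>_. la)) (0\<^sub>m 1 m) (0\<^sub>m m 1) A3"
    using A W WW' blk by simp
  hence "\<forall>c<Suc k. A *\<^sub>v col (W * B) c = la \<cdot>\<^sub>v col (W * B) c"
    using eigenvector_cols_lift[OF A_Suc W[unfolded nm] A3 P3 k] eP3 unfolding B_def nm by blast
  with det_WB mult_carrier_mat[OF W B] show ?case by blast
qed

subsection \<open>Determinants and products of disjoint cycles\<close>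

lemma power_dvd_det_if_dvd_cols:
  fixes M :: "'a::comm_ring_1 mat"
  assumes M: "M \<in> carrier_mat n n" and C: "C \<subseteq> {0..<n}" and R: "finite R"
    and dvd: "\<And>r c. r < n \<Longrightarrow> c \<in> C \<Longrightarrow> r \<notin> R \<Longrightarrow> p dvd M $$ (r, c)"
  shows "p ^ (card C - card R) dvd det M"
proof -
  have "p ^ (card C - card R) dvd signof s * (\<Prod>i = 0..<n. M $$ (i, s i))"
    if s: "s permutes {0..<n}" for s
  proof -
    define T where "T = {i \<in> {0..<n}. s i \<in> C}"
    have "s ` T = C"
    proof
      show "C \<subseteq> s ` T"
      proof
        fix c assume c: "c \<in> C"
        then obtain i where "i \<in> {0..<n}" "s i = c"
          using C permutes_image[OF s] by (metis imageE subsetD)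
        thus "c \<in> s ` T" using c unfolding T_def by auto
      qed
    qed (auto simp: T_def)
    hence "card T = card C" using card_image[OF permutes_inj_on[OF s]] by metis
    hence "card C - card R \<le> card (T - R)" using R by (metis diff_card_le_card_Diff)
    hence "p ^ (card C - card R) dvd (\<Prod>i\<in>T - R. p)" by (simp add: le_imp_power_dvd)
    also have "\<dots> dvd (\<Prod>i\<in>T - R. M $$ (i, s i))"
      by (rule prod_dvd_prod, rule dvd) (auto simp: T_def)
    also have "\<dots> dvd (\<Prod>i = 0..<n. M $$ (i, s i))"
      by (rule prod_dvd_prod_subset) (auto simp: T_def)
    finally show ?thesis by simp
  qed
  thus ?thesis unfolding det_def'[OF M] by (intro dvd_sum) auto
qed

lemma sign_cycle_of_list: "distinct cs \<Longrightarrow> sign (cycle_of_list cs) = (-1) ^ (length cs - 1)"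
proof (induct cs rule: cycle_of_list.induct)
  case (1 i j cs)
  have "sign (cycle_of_list (i # j # cs))
      = sign (Transposition.transpose i j) * sign (cycle_of_list (j # cs))"
    by (simp add: sign_compose permutation_swap_id permutation_of_cycle)
  also have "\<dots> = - ((-1) ^ (length (j # cs) - 1))" using 1 by (simp add: sign_swap_id)
  finally show ?case by (simp del: cycle_of_list.simps)
qed (auto simp: sign_id)

lemma cycle_of_list_nth:
  assumes "distinct cs" "a < length cs"
  shows "cycle_of_list cs (cs ! a) = cs ! (Suc a mod length cs)"
  using arg_cong[OF cyclic_rotation[OF assms(1), of 1], of "\<lambda>xs. xs ! a"] assms(2)
    nth_rotate[of a cs 1]
  by simp

definition cycles_perm :: "('b \<Rightarrow> 'a list) \<Rightarrow> 'b list \<Rightarrow> 'a \<Rightarrow> 'a" where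
  "cycles_perm P xs = foldr (\<lambda>i f. cycle_of_list (P i) \<circ> f) xs id"

lemma cycles_perm_Cons: "cycles_perm P (i # xs) = cycle_of_list (P i) \<circ> cycles_perm P xs"
  by (simp add: cycles_perm_def)

lemma permutation_cycles_perm: "permutation (cycles_perm P xs)"
proof (induct xs)
  case (Cons i xs)
  show ?case unfolding cycles_perm_Cons by (rule permutation_compose[OF permutation_of_cycle Cons])
qed (simp add: cycles_perm_def)

lemma cycles_perm_outside: "x \<notin> (\<Union>i\<in>set xs. set (P i)) \<Longrightarrow> cycles_perm P xs x = x"
  by (induct xs) (simp_all add: cycles_perm_def id_outside_supp)

context
  fixes P :: "'b \<Rightarrow> 'a list" and xs :: "'b list"
  assumes distinct: "distinct xs"
    and disjoint: "\<forall>i\<in>set xs. \<forall>i'\<in>set xs. i \<noteq> i' \<longrightarrow> set (P i) \<inter> set (P i') = {}"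
begin

lemma cycles_perm_on_cycle:
  assumes "i \<in> set xs" "x \<in> set (P i)"
  shows "cycles_perm P xs x = cycle_of_list (P i) x"
  using distinct disjoint assms
proof (induct xs)
  case (Cons i0 xs)
  show ?case
  proof (cases "i = i0")
    case True
    hence "x \<notin> (\<Union>i\<in>set xs. set (P i))" using Cons.prems by auto
    thus ?thesis using True by (simp add: cycles_perm_Cons cycles_perm_outside)
  next
    case False
    hence "i \<in> set xs" "set (P i0) \<inter> set (P i) = {}" using Cons.prems by auto
    moreover have "cycle_of_list (P i) x \<in> set (P i)"
      using Cons.prems(4) by (metis cycle_permutes permutes_in_image)
    ultimately have "cycle_of_list (P i) x \<notin> set (P i0)" by blast
    thus ?thesis using Cons \<open>i \<in> set xs\<close> by (simp add: cycles_perm_Cons id_outside_supp)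
  qed
qed simp

lemma sign_cycles_perm:
  assumes "\<forall>i\<in>set xs. distinct (P i)"
  shows "sign (cycles_perm P xs) = (\<Prod>i\<in>set xs. (-1) ^ (length (P i) - 1))"
  using distinct assms
  by (induct xs) (simp_all add: cycles_perm_def sign_compose permutation_of_cycle
      permutation_cycles_perm[unfolded cycles_perm_def] sign_cycle_of_list)

end

subsection \<open>Orbits of admissible permutations\<close>

lemma card_fixed_plus_card_moved:
  "card {r\<in>{0..<n}. s r = r} + card {r\<in>{0..<n}. s r \<noteq> r} = n"
proof -
  have "card {r\<in>{0..<n}. s r = r} + card {r\<in>{0..<n}. s r \<noteq> r}
      = card ({r\<in>{0..<n}. s r = r} \<union> {r\<in>{0..<n}. s r \<noteq> r})"
    by (rule card_Un_disjoint[symmetric]) auto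
  also have "{r\<in>{0..<n}. s r = r} \<union> {r\<in>{0..<n}. s r \<noteq> r} = {0..<n}" by auto
  finally show ?thesis by simp
qed

locale terminal_pairing =
  fixes n :: nat and E :: "nat \<Rightarrow> nat \<Rightarrow> bool" and I J :: "nat set" and \<beta> :: "nat \<Rightarrow> nat"
  assumes I_sub: "I \<subseteq> {0..<n}" and J_sub: "J \<subseteq> {0..<n}" and I_J_disjoint: "I \<inter> J = {}"
    and bij_\<beta>: "bij_betw \<beta> J I"
begin

definition admissible :: "(nat \<Rightarrow> nat) \<Rightarrow> bool" where
  "admissible s \<longleftrightarrow> s permutes {0..<n} \<and> (\<forall>j\<in>J. s j = \<beta> j)
     \<and> (\<forall>r<n. r \<notin> J \<longrightarrow> s r \<noteq> r \<longrightarrow> E r (s r))"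

definition exit_time :: "(nat \<Rightarrow> nat) \<Rightarrow> nat \<Rightarrow> nat" where
  "exit_time s i = (LEAST k. (s ^^ k) i \<in> J)"

definition orbit_path :: "(nat \<Rightarrow> nat) \<Rightarrow> nat \<Rightarrow> nat list" where
  "orbit_path s i = map (\<lambda>a. (s ^^ a) i) [0..<Suc (exit_time s i)]"

lemma finite_I: "finite I" using I_sub finite_subset by blast
lemma finite_J: "finite J" using J_sub finite_subset by blast
lemma card_J_eq_card_I: "card J = card I" using bij_betw_same_card[OF bij_\<beta>] .

lemma \<beta>_in_I: "j \<in> J \<Longrightarrow> \<beta> j \<in> I" using bij_\<beta> by (auto simp: bij_betw_def)

lemma pm_length_eq_card_Union:
  assumes "path_matching n E I J P" shows "pm_length I P = card (\<Union>i\<in>I. set (P i))"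
proof -
  have "pm_length I P = (\<Sum>i\<in>I. card (set (P i)))"
    using assms unfolding pm_length_def path_matching_def sa_path_def by (simp add: distinct_card)
  also have "\<dots> = card (\<Union>i\<in>I. set (P i))"
    using finite_I assms by (intro card_UN_disjoint[symmetric]) (auto simp: path_matching_def)
  finally show ?thesis .
qed

lemma path_matching_vertices:
  assumes "path_matching n E I J P" shows "(\<Union>i\<in>I. set (P i)) \<subseteq> {0..<n}"
  using assms unfolding path_matching_def sa_path_def by auto

lemma length_path_ge_2:
  assumes Q: "path_matching n E I J Q" and i: "i \<in> I" shows "2 \<le> length (Q i)"
proof -
  have "Q i \<noteq> []" and "hd (Q i) = i" and "last (Q i) \<in> J"
    using Q i unfolding path_matching_def sa_path_def bij_betw_def by auto
  with i I_J_disjoint show ?thesis by (cases "Q i"; cases "tl (Q i)") auto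
qed

context
  fixes s assumes adm: "admissible s"
begin

lemma admissible_permutes: "s permutes {0..<n}" using adm unfolding admissible_def by auto

lemma admissible_on_J: "j \<in> J \<Longrightarrow> s j = \<beta> j" using adm unfolding admissible_def by auto

lemma admissible_funpow_less: "x < n \<Longrightarrow> (s ^^ a) x < n"
  using permutes_in_image[OF permutes_funpow[OF admissible_permutes, of a], of x] by simp

lemma admissible_funpow_pred_in_J:
  assumes "i \<in> I" "0 < d" "(s ^^ d) x = i" shows "(s ^^ (d - 1)) x \<in> J"
proof -
  have "s ((s ^^ (d - 1)) x) \<in> I" using assms by (metis Suc_diff_1 comp_apply funpow.simps(2))
  then obtain j where j: "j \<in> J" "\<beta> j = s ((s ^^ (d - 1)) x)"
    using bij_\<beta> by (metis bij_betw_def imageE)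
  hence "s j = s ((s ^^ (d - 1)) x)" using admissible_on_J by simp
  thus ?thesis using j permutes_inj[OF admissible_permutes] by (metis injD)
qed

lemma exit_time_in_J: "i \<in> I \<Longrightarrow> (s ^^ exit_time s i) i \<in> J"
proof -
  assume i: "i \<in> I"
  have "permutation s" using admissible_permutes unfolding permutation_permutes by blast
  from least_power_of_permutation[OF this, of i]
  have "(s ^^ least_power s i) i = i" "0 < least_power s i" by auto
  from admissible_funpow_pred_in_J[OF i this(2,1)] have "\<exists>k. (s ^^ k) i \<in> J" by blast
  thus ?thesis unfolding exit_time_def by (rule LeastI_ex)
qed

lemma not_in_J_before_exit_time: "a < exit_time s i \<Longrightarrow> (s ^^ a) i \<notin> J"
  unfolding exit_time_def by (rule not_less_Least)

text \<open>Returning to a point of an orbit requires passing through \<open>J\<close>, because the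
  predecessor of a point of \<open>I\<close> lies in \<open>J\<close>.\<close>

lemma funpow_neq_before_exit_time:
  assumes i: "i \<in> I" "i' \<in> I" and ac: "a \<le> c" "c \<le> exit_time s i'" "(a, i) \<noteq> (c, i')"
  shows "(s ^^ a) i \<noteq> (s ^^ c) i'"
proof
  assume eq: "(s ^^ a) i = (s ^^ c) i'"
  have "(s ^^ a) ((s ^^ (c - a)) i') = (s ^^ a) i"
    using ac eq by (metis add_diff_inverse_nat comp_apply funpow_add not_le)
  hence returns: "(s ^^ (c - a)) i' = i"
    using inj_fn[OF permutes_inj[OF admissible_permutes], of a] by (simp add: inj_eq)
  hence "c - a \<noteq> 0" using ac by auto
  with admissible_funpow_pred_in_J[OF i(1) _ returns] have "(s ^^ (c - a - 1)) i' \<in> J" by simp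
  moreover have "c - a - 1 < exit_time s i'" using ac \<open>c - a \<noteq> 0\<close> by simp
  ultimately show False using not_in_J_before_exit_time by blast
qed

lemma length_orbit_path: "length (orbit_path s i) = Suc (exit_time s i)"
  unfolding orbit_path_def by simp

lemma nth_orbit_path: "a \<le> exit_time s i \<Longrightarrow> orbit_path s i ! a = (s ^^ a) i"
  unfolding orbit_path_def by (simp del: upt_Suc add: nth_map_upt)

lemma set_orbit_path: "set (orbit_path s i) = {(s ^^ a) i |a. a \<le> exit_time s i}"
  unfolding orbit_path_def by (auto simp del: upt_Suc simp add: less_Suc_eq_le)

lemma hd_orbit_path: "hd (orbit_path s i) = i"
  unfolding orbit_path_def by (simp add: hd_map del: upt_Suc)

lemma last_orbit_path: "last (orbit_path s i) = (s ^^ exit_time s i) i"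
  unfolding orbit_path_def by simp

lemma orbit_paths_disjoint:
  assumes "i \<in> I" "i' \<in> I" "i \<noteq> i'" shows "set (orbit_path s i) \<inter> set (orbit_path s i') = {}"
proof -
  have "(s ^^ a) i \<noteq> (s ^^ c) i'" if "a \<le> exit_time s i" "c \<le> exit_time s i'" for a c
    using funpow_neq_before_exit_time[OF assms(1,2), of a c]
      funpow_neq_before_exit_time[OF assms(2,1), of c a] assms(3) nat_le_linear[of a c] that
    by auto
  thus ?thesis unfolding set_orbit_path by blast
qed

lemma sa_path_orbit_path:
  assumes i: "i \<in> I" shows "sa_path n E (orbit_path s i)"
  unfolding sa_path_def
proof (intro conjI allI impI)
  show "orbit_path s i \<noteq> []" unfolding orbit_path_def by simp
  show "distinct (orbit_path s i)"
    unfolding distinct_conv_nth length_orbit_path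
  proof (intro allI impI)
    fix a c assume "a < Suc (exit_time s i)" "c < Suc (exit_time s i)" "a \<noteq> c"
    thus "orbit_path s i ! a \<noteq> orbit_path s i ! c"
      using funpow_neq_before_exit_time[OF i i, of a c] funpow_neq_before_exit_time[OF i i, of c a]
        nat_le_linear[of a c]
      by (auto simp: nth_orbit_path)
  qed
  show "set (orbit_path s i) \<subseteq> {0..<n}"
    unfolding set_orbit_path using admissible_funpow_less i I_sub by auto
  fix a assume "Suc a < length (orbit_path s i)"
  hence a: "a < exit_time s i" unfolding length_orbit_path by simp
  have "s ((s ^^ a) i) \<noteq> (s ^^ a) i"
    using funpow_neq_before_exit_time[OF i i, of a "Suc a"] a by simp
  moreover have "(s ^^ a) i < n" using admissible_funpow_less i I_sub by auto
  ultimately have "E ((s ^^ a) i) (s ((s ^^ a) i))"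
    using adm not_in_J_before_exit_time[OF a] unfolding admissible_def by auto
  thus "E (orbit_path s i ! a) (orbit_path s i ! Suc a)" using a by (simp add: nth_orbit_path)
qed

lemma bij_betw_last_orbit_paths: "bij_betw (\<lambda>i. last (orbit_path s i)) I J"
proof -
  have inj: "inj_on (\<lambda>i. last (orbit_path s i)) I"
  proof (rule inj_onI, rule ccontr)
    fix i i' assume "i \<in> I" "i' \<in> I" "last (orbit_path s i) = last (orbit_path s i')" "i \<noteq> i'"
    thus False using orbit_paths_disjoint[of i i'] last_in_set[of "orbit_path s i"]
        last_in_set[of "orbit_path s i'"]
      by (auto simp: orbit_path_def)
  qed
  have sub: "(\<lambda>i. last (orbit_path s i)) ` I \<subseteq> J"
    using exit_time_in_J by (auto simp: last_orbit_path)
  have "card ((\<lambda>i. last (orbit_path s i)) ` I) = card J"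
    using card_image[OF inj] card_J_eq_card_I by simp
  with inj sub finite_J show ?thesis unfolding bij_betw_def using card_subset_eq by blast
qed

lemma path_matching_orbit_paths: "path_matching n E I J (orbit_path s)"
  unfolding path_matching_def
  by (simp add: sa_path_orbit_path hd_orbit_path orbit_paths_disjoint bij_betw_last_orbit_paths)

lemma orbit_paths_moved: "(\<Union>i\<in>I. set (orbit_path s i)) \<subseteq> {x\<in>{0..<n}. s x \<noteq> x}"
proof
  fix x assume "x \<in> (\<Union>i\<in>I. set (orbit_path s i))"
  then obtain i a where i: "i \<in> I" and a: "a \<le> exit_time s i" and x: "x = (s ^^ a) i"
    by (auto simp: set_orbit_path)
  have "x < n" using admissible_funpow_less i I_sub x by auto
  moreover have "s x \<noteq> x"
  proof (cases "a < exit_time s i")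
    case True
    thus ?thesis using funpow_neq_before_exit_time[OF i i, of a "Suc a"] x by simp
  next
    case False
    hence "x \<in> J" using a exit_time_in_J[OF i] x by simp
    thus ?thesis using admissible_on_J \<beta>_in_I I_J_disjoint by force
  qed
  ultimately show "x \<in> {x\<in>{0..<n}. s x \<noteq> x}" by simp
qed

end

end

locale unique_min_matching = terminal_pairing +
  fixes P0 :: "nat \<Rightarrow> nat list"
  assumes loopless: "\<forall>v<n. \<not> E v v"
    and path_matching_P0: "path_matching n E I J P0"
    and P0_minimal: "\<forall>Q. path_matching n E I J Q \<longrightarrow> pm_length I P0 \<le> pm_length I Q"
    and unique_matching_map: "\<forall>Q. path_matching n E I J Q \<longrightarrow> pm_length I Q = pm_length I P0
        \<longrightarrow> (\<forall>i\<in>I. \<beta> (last (Q i)) = i)"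
begin

definition matching_perm :: "(nat \<Rightarrow> nat list) \<Rightarrow> nat \<Rightarrow> nat" where
  "matching_perm Q = cycles_perm Q (sorted_list_of_set I)"

text \<open>\<open>uncovered\<close> is the \<open>\<ell>\<close> of the statement: a minimal path matching misses exactly
  \<open>uncovered\<close> vertices.\<close>

definition uncovered :: nat where
  "uncovered = n - pm_length I P0"

context
  fixes Q assumes Q: "path_matching n E I J Q"
begin

lemma matching_perm_nth:
  assumes "i \<in> I" "a < length (Q i)"
  shows "matching_perm Q (Q i ! a) = Q i ! (Suc a mod length (Q i))"
proof -
  have "matching_perm Q (Q i ! a) = cycle_of_list (Q i) (Q i ! a)"
    unfolding matching_perm_def using Q assms finite_I
    by (intro cycles_perm_on_cycle) (auto simp: path_matching_def)
  also have "\<dots> = Q i ! (Suc a mod length (Q i))"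
    using Q assms by (intro cycle_of_list_nth) (auto simp: path_matching_def sa_path_def)
  finally show ?thesis .
qed

lemma matching_perm_outside: "x \<notin> (\<Union>i\<in>I. set (Q i)) \<Longrightarrow> matching_perm Q x = x"
  unfolding matching_perm_def using finite_I by (simp add: cycles_perm_outside)

lemma matching_perm_permutes: "matching_perm Q permutes {0..<n}"
proof -
  have "bij (matching_perm Q)"
    unfolding matching_perm_def by (rule permutation_bijective[OF permutation_cycles_perm])
  moreover have "\<forall>x. x \<notin> {0..<n} \<longrightarrow> matching_perm Q x = x"
    using matching_perm_outside path_matching_vertices[OF Q] by blast
  ultimately show ?thesis unfolding permutes_def bij_iff by blast
qed

lemma sign_matching_perm: "sign (matching_perm Q) = (-1) ^ (pm_length I Q - card I)"
proof -
  have "sign (matching_perm Q) = (\<Prod>i\<in>I. (-1) ^ (length (Q i) - 1))"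
    unfolding matching_perm_def using Q finite_I
    by (subst sign_cycles_perm) (auto simp: path_matching_def sa_path_def)
  also have "\<dots> = (-1) ^ (\<Sum>i\<in>I. length (Q i) - 1)" by (simp add: power_sum)
  also have "(\<Sum>i\<in>I. length (Q i) - 1) = (\<Sum>i\<in>I. length (Q i)) - (\<Sum>i\<in>I. 1)"
    using length_path_ge_2[OF Q] by (intro sum_subtractf_nat) force
  also have "\<dots> = pm_length I Q - card I" by (simp add: pm_length_def)
  finally show ?thesis .
qed

lemma matching_perm_moves: "x \<in> (\<Union>i\<in>I. set (Q i)) \<Longrightarrow> matching_perm Q x \<noteq> x"
proof -
  assume "x \<in> (\<Union>i\<in>I. set (Q i))"
  then obtain i a where i: "i \<in> I" and a: "a < length (Q i)" and x: "x = Q i ! a"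
    by (auto simp: in_set_conv_nth)
  have "distinct (Q i)" using Q i unfolding path_matching_def sa_path_def by auto
  moreover have "Suc a mod length (Q i) \<noteq> a" "Suc a mod length (Q i) < length (Q i)"
    using a length_path_ge_2[OF Q i] by (auto simp: mod_Suc)
  ultimately show ?thesis
    using matching_perm_nth[OF i a] a unfolding x by (simp add: nth_eq_iff_index_eq)
qed

end

lemma pm_length_P0_le: "pm_length I P0 \<le> n"
  using pm_length_eq_card_Union[OF path_matching_P0]
    card_mono[OF _ path_matching_vertices[OF path_matching_P0]]
  by simp

text \<open>The orbits of \<open>I\<close> under an admissible permutation form a path matching through
  moved vertices; this bounds the number of fixed points.\<close>

lemma card_fixed_le_uncovered:
  assumes adm: "admissible s" shows "card {r\<in>{0..<n}. s r = r} \<le> uncovered"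
proof -
  have "pm_length I (orbit_path s) \<le> card {r\<in>{0..<n}. s r \<noteq> r}"
    unfolding pm_length_eq_card_Union[OF path_matching_orbit_paths[OF adm]]
    using orbit_paths_moved[OF adm] by (intro card_mono) auto
  moreover have "pm_length I P0 \<le> pm_length I (orbit_path s)"
    using P0_minimal path_matching_orbit_paths[OF adm] by auto
  ultimately show ?thesis using card_fixed_plus_card_moved[of n s] unfolding uncovered_def by linarith
qed

lemma extremal_orbit_paths:
  assumes adm: "admissible s" and fixed: "card {r\<in>{0..<n}. s r = r} = uncovered"
  shows "pm_length I (orbit_path s) = pm_length I P0"
    and "(\<Union>i\<in>I. set (orbit_path s i)) = {r\<in>{0..<n}. s r \<noteq> r}"
proof -
  let ?moved = "{r\<in>{0..<n}. s r \<noteq> r}"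
  have Q: "path_matching n E I J (orbit_path s)" by (rule path_matching_orbit_paths[OF adm])
  have sub: "(\<Union>i\<in>I. set (orbit_path s i)) \<subseteq> ?moved" by (rule orbit_paths_moved[OF adm])
  have "pm_length I (orbit_path s) \<le> card ?moved"
    unfolding pm_length_eq_card_Union[OF Q] using sub by (intro card_mono) auto
  moreover have "pm_length I P0 \<le> pm_length I (orbit_path s)" using P0_minimal Q by auto
  moreover have "card ?moved = pm_length I P0"
    using card_fixed_plus_card_moved[of n s] fixed pm_length_P0_le unfolding uncovered_def by linarith
  ultimately have pm_eq: "pm_length I (orbit_path s) = pm_length I P0"
    and card_eq: "card (\<Union>i\<in>I. set (orbit_path s i)) = card ?moved"
    using pm_length_eq_card_Union[OF Q] by auto
  show "pm_length I (orbit_path s) = pm_length I P0" by (rule pm_eq)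
  show "(\<Union>i\<in>I. set (orbit_path s i)) = ?moved" using card_subset_eq[OF _ sub card_eq] by auto
qed

text \<open>Uniqueness of the matching map enters here: the orbit paths of an extremal admissible
  permutation form a minimal path matching, so \<open>\<beta>\<close> maps their ends back to their starts.\<close>

lemma extremal_admissible_eq_matching_perm:
  assumes adm: "admissible s" and fixed: "card {r\<in>{0..<n}. s r = r} = uncovered"
  shows "s = matching_perm (orbit_path s)"
proof
  fix x
  let ?Q = "orbit_path s"
  have Q: "path_matching n E I J ?Q" by (rule path_matching_orbit_paths[OF adm])
  have closes: "\<forall>i\<in>I. \<beta> (last (?Q i)) = i"
    using unique_matching_map Q extremal_orbit_paths(1)[OF adm fixed] by blast
  show "s x = matching_perm ?Q x"
  proof (cases "x \<in> (\<Union>i\<in>I. set (?Q i))")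
    case True
    then obtain i a where i: "i \<in> I" and a: "a \<le> exit_time s i" and x: "x = (s ^^ a) i"
      by (auto simp: set_orbit_path[OF adm])
    have "matching_perm ?Q x = ?Q i ! (Suc a mod Suc (exit_time s i))"
      using matching_perm_nth[OF Q i, of a] a x
      by (simp add: length_orbit_path[OF adm] nth_orbit_path[OF adm])
    also have "\<dots> = s x"
    proof (cases "a < exit_time s i")
      case True
      thus ?thesis using x by (simp add: nth_orbit_path[OF adm])
    next
      case False
      hence "x = last (?Q i)" "x \<in> J"
        using a x exit_time_in_J[OF adm i] by (simp_all add: last_orbit_path[OF adm])
      thus ?thesis using False a closes i admissible_on_J[OF adm] by (simp add: nth_orbit_path[OF adm])
    qed
    finally show ?thesis by simp
  next
    case False
    moreover have "s x = x" if "x < n"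
      using False that extremal_orbit_paths(2)[OF adm fixed] by auto
    moreover have "s x = x" if "\<not> x < n"
      using admissible_permutes[OF adm] that unfolding permutes_def by auto
    ultimately show ?thesis using matching_perm_outside[OF Q] by metis
  qed
qed

text \<open>Hence every extremal admissible permutation contributes
  \<open>sign s * (-1) ^ card {r. r \<notin> J \<and> s r \<noteq> r} = 1\<close> to the leading coefficient of the
  determinant below.\<close>

lemma sign_extremal_admissible:
  assumes adm: "admissible s" and fixed: "card {r\<in>{0..<n}. s r = r} = uncovered"
  shows "sign s = (-1) ^ card {r\<in>{0..<n}. r \<notin> J \<and> s r \<noteq> r}"
proof -
  let ?moved = "{r\<in>{0..<n}. s r \<noteq> r}"
  have Q: "path_matching n E I J (orbit_path s)" by (rule path_matching_orbit_paths[OF adm])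
  have "sign s = (-1) ^ (pm_length I (orbit_path s) - card I)"
    using sign_matching_perm[OF Q] extremal_admissible_eq_matching_perm[OF adm fixed] by simp
  also have "pm_length I (orbit_path s) = card ?moved"
    using pm_length_eq_card_Union[OF Q] extremal_orbit_paths(2)[OF adm fixed] by simp
  also have "J \<subseteq> ?moved"
    using J_sub I_J_disjoint admissible_on_J[OF adm] \<beta>_in_I by fastforce
  hence "card ?moved - card I = card (?moved - J)"
    using finite_J card_J_eq_card_I by (simp add: card_Diff_subset)
  also have "?moved - J = {r\<in>{0..<n}. r \<notin> J \<and> s r \<noteq> r}" by auto
  finally show ?thesis .
qed

lemma admissible_matching_perm_P0: "admissible (matching_perm P0)"
  unfolding admissible_def
proof (intro conjI ballI allI impI)
  show "matching_perm P0 permutes {0..<n}" by (rule matching_perm_permutes[OF path_matching_P0])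
next
  fix j assume j: "j \<in> J"
  have bij: "bij_betw (\<lambda>i. last (P0 i)) I J" using path_matching_P0 unfolding path_matching_def by auto
  with j obtain i where i: "i \<in> I" and j_last: "j = last (P0 i)" by (auto simp: bij_betw_def)
  have "P0 i \<noteq> []" "hd (P0 i) = i"
    using path_matching_P0 i unfolding path_matching_def sa_path_def by auto
  hence "matching_perm P0 j = i"
    using matching_perm_nth[OF path_matching_P0 i, of "length (P0 i) - 1"] j_last
    by (simp add: last_conv_nth hd_conv_nth)
  thus "matching_perm P0 j = \<beta> j"
    using unique_matching_map path_matching_P0 i j_last by auto
next
  fix r assume r: "r < n" "r \<notin> J" "matching_perm P0 r \<noteq> r"
  then obtain i a where i: "i \<in> I" and a: "a < length (P0 i)" and ra: "r = P0 i ! a"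
    using matching_perm_outside[OF path_matching_P0] by (force simp: in_set_conv_nth)
  have sa: "sa_path n E (P0 i)" using path_matching_P0 i unfolding path_matching_def by auto
  have "Suc a < length (P0 i)"
  proof (rule ccontr)
    assume "\<not> Suc a < length (P0 i)"
    hence "a = length (P0 i) - 1" using a by simp
    moreover have "P0 i \<noteq> []" using a by auto
    ultimately have "r = last (P0 i)" using ra by (simp add: last_conv_nth)
    hence "r \<in> J" using path_matching_P0 i unfolding path_matching_def bij_betw_def by auto
    thus False using r by simp
  qed
  thus "E r (matching_perm P0 r)"
    using sa matching_perm_nth[OF path_matching_P0 i a] ra unfolding sa_path_def by auto
qed

lemma card_fixed_matching_perm_P0: "card {r\<in>{0..<n}. matching_perm P0 r = r} = uncovered"
proof -
  let ?U = "\<Union>i\<in>I. set (P0 i)"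
  have "{r\<in>{0..<n}. matching_perm P0 r = r} = {0..<n} - ?U"
    using matching_perm_moves[OF path_matching_P0] matching_perm_outside[OF path_matching_P0] by blast
  thus ?thesis
    using card_Diff_subset[OF finite_subset[OF path_matching_vertices[OF path_matching_P0]]
        path_matching_vertices[OF path_matching_P0]]
    unfolding uncovered_def pm_length_eq_card_Union[OF path_matching_P0] by simp
qed

end

subsection \<open>The pairing matrix\<close>

lemma prod_if_eq_power_card:
  "finite A \<Longrightarrow> (\<Prod>r\<in>A. if P r then c else 1) = (c::'a::comm_monoid_mult) ^ card {r\<in>A. P r}"
  by (simp add: prod.If_cases Collect_conj_eq Int_commute)

lemma sum_if_eq_card:
  "finite A \<Longrightarrow> (\<Sum>r\<in>A. if P r then 1 else 0) = (of_nat (card {r\<in>A. P r}) :: 'a::semiring_1)"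
  by (simp add: sum.If_cases Collect_conj_eq Int_commute)

lemma prod_monom:
  "finite A \<Longrightarrow> (\<Prod>r\<in>A. monom (f r) (g r)) = monom (\<Prod>r\<in>A. f r) (\<Sum>r\<in>A. g r)"
  by (induct A rule: finite_induct) (auto simp: mult_monom)

context unique_min_matching
begin

text \<open>Its permutation expansion runs over the admissible permutations.\<close>

definition pairing_mat :: "real poly mat" where
  "pairing_mat = mat n n (\<lambda>(r, c). if r \<in> J then (if c = \<beta> r then 1 else 0)
      else (if r = c then [:0, 1:] else 0) - [:if E r c then 1 else 0:])"

lemma pairing_mat_carrier: "pairing_mat \<in> carrier_mat n n"
  unfolding pairing_mat_def by simp

lemma prod_pairing_mat_not_admissible:
  assumes s: "s permutes {0..<n}" and "\<not> admissible s"
  shows "(\<Prod>r = 0..<n. pairing_mat $$ (r, s r)) = 0"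
proof -
  have "\<exists>r<n. pairing_mat $$ (r, s r) = 0"
  proof (cases "\<forall>j\<in>J. s j = \<beta> j")
    case True
    with assms obtain r where "r < n" "r \<notin> J" "s r \<noteq> r" "\<not> E r (s r)"
      unfolding admissible_def by auto
    thus ?thesis using permutes_in_image[OF s] by (intro exI[of _ r]) (auto simp: pairing_mat_def)
  next
    case False
    then obtain j where "j \<in> J" "s j \<noteq> \<beta> j" by auto
    thus ?thesis using J_sub permutes_in_image[OF s]
      by (intro exI[of _ j]) (auto simp: pairing_mat_def)
  qed
  thus ?thesis by (intro prod_zero) auto
qed

lemma pairing_mat_admissible_entry:
  assumes adm: "admissible s" and r: "r < n"
  shows "pairing_mat $$ (r, s r)
    = monom (if r \<notin> J \<and> s r \<noteq> r then -1 else 1) (if s r = r then 1 else 0)"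
proof -
  have sr: "s r < n" using permutes_in_image[OF admissible_permutes[OF adm]] r by simp
  show ?thesis
  proof (cases "r \<in> J")
    case True
    moreover have "\<beta> r \<in> I" using \<beta>_in_I[OF True] .
    ultimately have "s r = \<beta> r" "s r \<noteq> r"
      using admissible_on_J[OF adm] I_J_disjoint by auto
    thus ?thesis using True r sr by (simp add: pairing_mat_def one_pCons)
  next
    case False
    show ?thesis
    proof (cases "s r = r")
      case True
      thus ?thesis using False loopless r by (simp add: pairing_mat_def monom_Suc)
    next
      case moved: False
      hence "E r (s r)" using adm False r unfolding admissible_def by auto
      thus ?thesis using False moved r sr by (simp add: pairing_mat_def minus_pCons monom_0)
    qed
  qed
qed

lemma prod_pairing_mat_admissible:
  assumes adm: "admissible s"
  shows "(\<Prod>r = 0..<n. pairing_mat $$ (r, s r))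
    = monom ((-1) ^ card {r\<in>{0..<n}. r \<notin> J \<and> s r \<noteq> r}) (card {r\<in>{0..<n}. s r = r})"
proof -
  have "(\<Prod>r = 0..<n. pairing_mat $$ (r, s r))
      = (\<Prod>r = 0..<n. monom (if r \<notin> J \<and> s r \<noteq> r then -1 else 1) (if s r = r then 1 else 0))"
    by (intro prod.cong refl) (simp add: pairing_mat_admissible_entry[OF adm])
  also have "\<dots> = monom (\<Prod>r = 0..<n. if r \<notin> J \<and> s r \<noteq> r then -1 else 1)
      (\<Sum>r = 0..<n. if s r = r then 1 else 0)"
    by (rule prod_monom) simp
  finally show ?thesis
    by (simp only: prod_if_eq_power_card sum_if_eq_card finite_atLeastLessThan of_nat_id)
qed

lemma coeff_det_pairing_mat: "coeff (det pairing_mat) k = (\<Sum>s | s permutes {0..<n}.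
    if admissible s \<and> card {r\<in>{0..<n}. s r = r} = k
    then of_int (sign s) * (-1) ^ card {r\<in>{0..<n}. r \<notin> J \<and> s r \<noteq> r} else 0)"
  unfolding det_def'[OF pairing_mat_carrier] coeff_sum
proof (intro sum.cong refl)
  fix s assume "s \<in> {s. s permutes {0..<n}}"
  then show "coeff (signof s * (\<Prod>r = 0..<n. pairing_mat $$ (r, s r))) k =
    (if admissible s \<and> card {r\<in>{0..<n}. s r = r} = k
     then of_int (sign s) * (-1) ^ card {r\<in>{0..<n}. r \<notin> J \<and> s r \<noteq> r} else 0)"
    by (cases "admissible s")
      (simp_all add: prod_pairing_mat_admissible prod_pairing_mat_not_admissible of_int_poly)
qed

lemma degree_det_pairing_mat: "degree (det pairing_mat) \<le> uncovered"
proof (rule degree_le, intro allI impI)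
  fix k assume "uncovered < k"
  thus "coeff (det pairing_mat) k = 0"
    unfolding coeff_det_pairing_mat using card_fixed_le_uncovered by (intro sum.neutral) force
qed

definition extremal_perms :: "(nat \<Rightarrow> nat) set" where
  "extremal_perms = {s. s permutes {0..<n} \<and> admissible s \<and> card {r\<in>{0..<n}. s r = r} = uncovered}"

lemma coeff_det_pairing_mat_uncovered:
  "coeff (det pairing_mat) uncovered = of_nat (card extremal_perms)"
proof -
  have "coeff (det pairing_mat) uncovered = (\<Sum>s | s permutes {0..<n}.
      if admissible s \<and> card {r\<in>{0..<n}. s r = r} = uncovered then 1 else 0)"
    unfolding coeff_det_pairing_mat
  proof (intro sum.cong refl)
    fix s
    show "(if admissible s \<and> card {r\<in>{0..<n}. s r = r} = uncovered
        then of_int (sign s) * (-1) ^ card {r\<in>{0..<n}. r \<notin> J \<and> s r \<noteq> r} else 0)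
      = (if admissible s \<and> card {r\<in>{0..<n}. s r = r} = uncovered then 1 else (0::real))"
      using sign_extremal_admissible[of s] by (simp flip: power_mult_distrib)
  qed
  also have "\<dots> = of_nat (card {s\<in>{s. s permutes {0..<n}}.
      admissible s \<and> card {r\<in>{0..<n}. s r = r} = uncovered})"
    by (rule sum_if_eq_card) (simp add: finite_permutations)
  finally show ?thesis unfolding extremal_perms_def by simp
qed

lemma det_pairing_mat_nonzero: "det pairing_mat \<noteq> 0"
proof -
  have "matching_perm P0 \<in> extremal_perms"
    unfolding extremal_perms_def
    using admissible_matching_perm_P0 card_fixed_matching_perm_P0 admissible_permutes by auto
  moreover have "finite extremal_perms"
    unfolding extremal_perms_def by (rule finite_subset[OF _ finite_permutations[of "{0..<n}"]]) auto
  ultimately have "coeff (det pairing_mat) uncovered \<noteq> 0"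
    unfolding coeff_det_pairing_mat_uncovered by auto
  thus ?thesis by auto
qed

end

subsection \<open>Eigenvalue multiplicities\<close>

lemma adjacency_matrix_carrier: "adjacency_matrix n E \<in> carrier_mat n n"
  unfolding adjacency_matrix_def by simp

lemma transpose_adjacency_matrix:
  "simple_graph n E \<Longrightarrow> transpose_mat (adjacency_matrix n E) = adjacency_matrix n E"
  unfolding adjacency_matrix_def simple_graph_def by (intro eq_matI) auto

lemma finite_eigenvalues_adjacency_matrix: "finite {x. eigenvalue (adjacency_matrix n E) x}"
proof -
  have "char_poly (adjacency_matrix n E) \<noteq> 0"
    using degree_monic_char_poly[OF adjacency_matrix_carrier[of n E]] by auto
  moreover have "{x. eigenvalue (adjacency_matrix n E) x}
      = {x. poly (char_poly (adjacency_matrix n E)) x = 0}"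
    using eigenvalue_root_char_poly[OF adjacency_matrix_carrier] by auto
  ultimately show ?thesis using poly_roots_finite by metis
qed

context unique_min_matching
begin

lemma pairing_mat_mult_entry:
  assumes P: "P \<in> carrier_mat n n" and r: "r < n" "r \<notin> J" and c: "c < n"
  shows "(pairing_mat * map_mat (\<lambda>a. [:a:]) P) $$ (r, c)
    = [:0, 1:] * [:P $$ (r, c):] - [:(adjacency_matrix n E *\<^sub>v col P c) $ r:]"
proof -
  let ?A = "adjacency_matrix n E"
  interpret const: comm_ring_hom "\<lambda>a::real. [:a:]" by unfold_locales (auto simp: one_pCons)
  have "(pairing_mat * map_mat (\<lambda>a. [:a:]) P) $$ (r, c) = (\<Sum>k = 0..<n.
      (if r = k then [:0, 1:] * [:P $$ (k, c):] else 0) - [:?A $$ (r, k) * P $$ (k, c):])"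
    using P r c pairing_mat_carrier
    by (auto simp: scalar_prod_def pairing_mat_def adjacency_matrix_def algebra_simps
        intro!: sum.cong)
  also have "\<dots> = [:0, 1:] * [:P $$ (r, c):] - [:(\<Sum>k = 0..<n. ?A $$ (r, k) * P $$ (k, c)):]"
    using r by (simp add: sum_subtractf flip: const.hom_sum)
  also have "(\<Sum>k = 0..<n. ?A $$ (r, k) * P $$ (k, c)) = (?A *\<^sub>v col P c) $ r"
    using P r c adjacency_matrix_carrier[of n E] by (simp add: scalar_prod_def)
  finally show ?thesis .
qed

text \<open>Multiplying \<open>pairing_mat\<close> by an invertible matrix whose first \<open>m\<close> columns are
  \<open>\<lambda>\<close>-eigenvectors makes those columns divisible by \<open>x - \<lambda>\<close> in every row outside \<open>J\<close>.\<close>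

lemma linear_power_dvd_det_pairing_mat:
  assumes sym: "transpose_mat (adjacency_matrix n E) = adjacency_matrix n E"
  shows "[:-la, 1:] ^ (eig_mult (adjacency_matrix n E) la - card J) dvd det pairing_mat"
proof -
  let ?A = "adjacency_matrix n E"
  define m where "m = eig_mult ?A la"
  have A: "?A \<in> carrier_mat n n" by (rule adjacency_matrix_carrier)
  from symmetric_mat_eigenvector_cols[OF A sym, of m la] obtain P where P: "P \<in> carrier_mat n n"
    and det_P: "det P \<noteq> 0" and eigen: "\<forall>c<m. ?A *\<^sub>v col P c = la \<cdot>\<^sub>v col P c"
    unfolding m_def eig_mult_def by auto
  have "char_poly ?A \<noteq> 0" using degree_monic_char_poly[OF A] by auto
  hence m_le: "m \<le> n"
    unfolding m_def eig_mult_def using order_degree degree_monic_char_poly[OF A] by metis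
  interpret const: comm_ring_hom "\<lambda>a::real. [:a:]" by unfold_locales (auto simp: one_pCons)
  define P' where "P' = map_mat (\<lambda>a. [:a:]) P"
  have P': "P' \<in> carrier_mat n n" unfolding P'_def using P by simp
  define M where "M = pairing_mat * P'"
  have M: "M \<in> carrier_mat n n" unfolding M_def using pairing_mat_carrier P' by simp
  have "[:-la, 1:] dvd M $$ (r, c)" if r: "r < n" "r \<notin> J" and c: "c \<in> {0..<m}" for r c
  proof -
    have cn: "c < n" using c m_le by simp
    have "M $$ (r, c) = [:0, 1:] * [:P $$ (r, c):] - [:la * P $$ (r, c):]"
      unfolding M_def P'_def pairing_mat_mult_entry[OF P r cn] using eigen c r cn P by simp
    also have "\<dots> = [:-la, 1:] * [:P $$ (r, c):]" by simp
    finally show ?thesis using dvd_triv_left by metis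
  qed
  hence "[:-la, 1:] ^ (card {0..<m} - card J) dvd det M"
    using m_le by (intro power_dvd_det_if_dvd_cols[OF M _ finite_J]) auto
  moreover have "det M = det pairing_mat * det P'"
    unfolding M_def by (rule det_mult[OF pairing_mat_carrier P'])
  moreover have "det P' = [:det P:]" unfolding P'_def by (rule const.hom_det)
  ultimately have "[:-la, 1:] ^ (m - card J) dvd det pairing_mat * [:det P:]" by simp
  thus ?thesis unfolding m_def by (rule dvd_mult_unit_iff[OF is_unit_triv[OF det_P], THEN iffD1])
qed

lemma sum_eig_mult_excess_le_uncovered:
  assumes sym: "transpose_mat (adjacency_matrix n E) = adjacency_matrix n E"
  shows "(\<Sum>x | eigenvalue (adjacency_matrix n E) x. eig_mult (adjacency_matrix n E) x - card J)
    \<le> uncovered"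
proof -
  let ?Eig = "{x. eigenvalue (adjacency_matrix n E) x}"
  let ?f = "det pairing_mat"
  have f: "?f \<noteq> 0" by (rule det_pairing_mat_nonzero)
  have "(\<Sum>x\<in>?Eig. eig_mult (adjacency_matrix n E) x - card J) \<le> (\<Sum>x\<in>?Eig. Polynomial.order x ?f)"
    using linear_power_dvd_det_pairing_mat[OF sym] f by (intro sum_mono) (simp add: order_divides)
  also have "\<dots> = (\<Sum>x\<in>?Eig \<inter> {x. poly ?f x = 0}. Polynomial.order x ?f)"
    using finite_eigenvalues_adjacency_matrix[of n E] f
    by (intro sum.mono_neutral_right) (auto simp: order_root)
  also have "\<dots> \<le> (\<Sum>x | poly ?f x = 0. Polynomial.order x ?f)"
    using poly_roots_finite[OF f] by (intro sum_mono2) auto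
  also have "\<dots> \<le> degree ?f" by (rule sum_order_le_degree[OF f])
  also have "\<dots> \<le> uncovered" by (rule degree_det_pairing_mat)
  finally show ?thesis by simp
qed

end

lemma min_path_matching_exists:
  assumes "\<exists>P. path_matching n E I J P" obtains P0 where "min_path_matching n E I J P0"
  using ex_has_least_nat[of "path_matching n E I J" _ "pm_length I"] assms
  unfolding min_path_matching_def by blast

lemma unique_min_matching_inverse_matching_map:
  assumes G: "simple_graph n E"
    and IJ: "I \<subseteq> {0..<n}" "J \<subseteq> {0..<n}" "I \<inter> J = {}"
    and min: "min_path_matching n E I J P0"
    and unique: "\<forall>P Q. min_path_matching n E I J P \<and> min_path_matching n E I J Q
            \<longrightarrow> (\<forall>i\<in>I. matching_map P i = matching_map Q i)"
  shows "unique_min_matching n E I J (the_inv_into I (matching_map P0)) P0"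
proof -
  have P0: "path_matching n E I J P0"
    "\<forall>Q. path_matching n E I J Q \<longrightarrow> pm_length I P0 \<le> pm_length I Q"
    using min unfolding min_path_matching_def by auto
  hence bij: "bij_betw (matching_map P0) I J" unfolding path_matching_def matching_map_def by auto
  show ?thesis
  proof unfold_locales
    show "bij_betw (the_inv_into I (matching_map P0)) J I" by (rule bij_betw_the_inv_into[OF bij])
    show "\<forall>Q. path_matching n E I J Q \<longrightarrow> pm_length I Q = pm_length I P0
        \<longrightarrow> (\<forall>i\<in>I. the_inv_into I (matching_map P0) (last (Q i)) = i)"
    proof (intro allI impI ballI)
      fix Q i assume "path_matching n E I J Q" "pm_length I Q = pm_length I P0" and i: "i \<in> I"
      hence "min_path_matching n E I J Q" unfolding min_path_matching_def using P0 by auto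
      hence "last (Q i) = matching_map P0 i" using unique min i unfolding matching_map_def by blast
      thus "the_inv_into I (matching_map P0) (last (Q i)) = i"
        using the_inv_into_f_f[OF bij_betw_imp_inj_on[OF bij] i] by simp
    qed
  qed (use G IJ P0 in \<open>auto simp: simple_graph_def\<close>)
qed

lemma sum_eig_mult_excess_plus_min_length_le:
  assumes G: "simple_graph n E"
    and IJ: "I \<subseteq> {0..<n}" "J \<subseteq> {0..<n}" "I \<inter> J = {}"
    and min: "min_path_matching n E I J P0"
    and unique: "\<forall>P Q. min_path_matching n E I J P \<and> min_path_matching n E I J Q
            \<longrightarrow> (\<forall>i\<in>I. matching_map P i = matching_map Q i)"
  shows "(\<Sum>x | eigenvalue (adjacency_matrix n E) x. eig_mult (adjacency_matrix n E) x - card J)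
      + pm_length I P0 \<le> n"
proof -
  interpret unique_min_matching n E I J "the_inv_into I (matching_map P0)" P0
    by (rule unique_min_matching_inverse_matching_map[OF assms])
  show ?thesis
    using sum_eig_mult_excess_le_uncovered[OF transpose_adjacency_matrix[OF G]] pm_length_P0_le
    unfolding uncovered_def by linarith
qed

lemma sum_le_card_mult_plus_sum_excess:
  fixes f :: "'a \<Rightarrow> nat"
  assumes "finite T" "S \<subseteq> T"
  shows "(\<Sum>x\<in>S. f x) \<le> card S * b + (\<Sum>x\<in>T. f x - b)"
proof -
  have "(\<Sum>x\<in>S. f x) \<le> (\<Sum>x\<in>S. b + (f x - b))" by (intro sum_mono) simp
  also have "\<dots> = card S * b + (\<Sum>x\<in>S. f x - b)" by (simp add: sum.distrib)
  also have "(\<Sum>x\<in>S. f x - b) \<le> (\<Sum>x\<in>T. f x - b)" using assms by (intro sum_mono2) auto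
  finally show ?thesis by simp
qed

theorem theorem3p1:
  fixes n b :: nat and E :: "nat \<Rightarrow> nat \<Rightarrow> bool" and I J :: "nat set" and l :: int
  assumes "simple_graph n E"
    and "I \<subseteq> {0..<n}" and "J \<subseteq> {0..<n}" and "I \<inter> J = {}"
    and "card I = b" and "card J = b"
    and "\<exists>P. path_matching n E I J P"
    and "\<forall>P Q. min_path_matching n E I J P \<and> min_path_matching n E I J Q
            \<longrightarrow> (\<forall>i\<in>I. matching_map P i = matching_map Q i)"
    and "\<forall>P. min_path_matching n E I J P \<longrightarrow> int (pm_length I P) = int n - l"
  shows "int (\<Sum>x\<in>{x. eigenvalue (adjacency_matrix n E) x}.
             eig_mult (adjacency_matrix n E) x - b) \<le> l
    \<and> (\<forall>S. S \<subseteq> {x. eigenvalue (adjacency_matrix n E) x} \<and> S \<noteq> {} \<longrightarrow>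
          int (\<Sum>x\<in>S. eig_mult (adjacency_matrix n E) x) \<le> int (card S * b) + l)"
proof -
  obtain P0 where min: "min_path_matching n E I J P0" using min_path_matching_exists assms(7) .
  have "(\<Sum>x | eigenvalue (adjacency_matrix n E) x. eig_mult (adjacency_matrix n E) x - b)
      + pm_length I P0 \<le> n"
    using sum_eig_mult_excess_plus_min_length_le[OF assms(1-4) min assms(8)] assms(6) by simp
  moreover have "int (pm_length I P0) = int n - l" using assms(9) min by blast
  ultimately have excess:
    "int (\<Sum>x | eigenvalue (adjacency_matrix n E) x. eig_mult (adjacency_matrix n E) x - b) \<le> l"
    by linarith
  show ?thesis
  proof (intro conjI allI impI)
    fix S assume "S \<subseteq> {x. eigenvalue (adjacency_matrix n E) x} \<and> S \<noteq> {}"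
    hence "(\<Sum>x\<in>S. eig_mult (adjacency_matrix n E) x) \<le> card S * b
        + (\<Sum>x | eigenvalue (adjacency_matrix n E) x. eig_mult (adjacency_matrix n E) x - b)"
      by (intro sum_le_card_mult_plus_sum_excess[OF finite_eigenvalues_adjacency_matrix]) auto
    hence "int (\<Sum>x\<in>S. eig_mult (adjacency_matrix n E) x) \<le> int (card S * b)
        + int (\<Sum>x | eigenvalue (adjacency_matrix n E) x. eig_mult (adjacency_matrix n E) x - b)"
      by (simp only: of_nat_le_iff of_nat_add[symmetric])
    thus "int (\<Sum>x\<in>S. eig_mult (adjacency_matrix n E) x) \<le> int (card S * b) + l"
      using excess by linarith
  qed (use excess in simp)
qed

end
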